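(* Let $\Gamma$ be a set of clauses with designated blocking variables. Any clause $C\lor\ell$ that is cost-BC w.r.t. $\Gamma$ and $\ell$ is also cost-LPR w.r.t. $\Gamma$.
   Context: Substitutions map variables to $0$, $1$ or literals ($\sigma(\lnot x)=\lnot\sigma(x)$); $(\sigma\circ\tau)(x)=\sigma(\tau(x))$; a partial assignment has $\sigma(x)\in\{0,1,x\}$, domain $\sigma^{-1}(\{0,1\})$; total means all variables assigned. $C{\upharpoonright}_\sigma$: apply $\sigma$ to the literals and simplify; $\Gamma{\upharpoonright}_\sigma$ is the multiset of $C{\upharpoonright}_\sigma\ne1$, $C\in\Gamma$. $\lnot C$ is the partial assignment falsifying all literals of $C$. $\Gamma\vdash_1 C$ means unit propagation on $\Gamma{\upharpoonright}_{\lnot C}$ derives the empty clause; $\Gamma\vdash_1\Delta$ means this for all $D\in\Delta$. $\mathrm{cost}(\alpha)=\sum_i\alpha(b_i)$ over blocking variables $b_i$. $C\lor\ell$ is cost-BC w.r.t. $\Gamma$ and $\ell$ if for every $D\lor\lnot\ell\in\Gamma$, $C\lor D$ is a tautology, and $\ell$ is not a blocking variable with positive polarity. A clause $E$ is cost-LPR w.r.t. $\Gamma$ if there is a partial assignment $\sigma$ with the same domain as $\lnot E$, differing from $\lnot E$ on exactly one variable, such that (1) $\Gamma{\upharpoonright}_{\lnot E}\vdash_1(\Gamma\cup\{E\}){\upharpoonright}_\sigma$ and (2) $\mathrm{cost}(\tau\circ\sigma)\le\mathrm{cost}(\tau)$ for all total $\tau\supseteq\lnot E$. *)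

theory Defs
  imports Main
begin

datatype 'v lit = Pos 'v | Neg 'v

fun var :: "'v lit \<Rightarrow> 'v" where
  "var (Pos x) = x" | "var (Neg x) = x"

fun neg_lit :: "'v lit \<Rightarrow> 'v lit" where
  "neg_lit (Pos x) = Neg x" | "neg_lit (Neg x) = Pos x"

type_synonym 'v clause = "'v lit set"
type_synonym 'v formula = "'v clause set"

text \<open>Partial assignment: None means unassigned (sigma(x) = x), Some b means sigma(x) = b.\<close>
type_synonym 'v assignment = "'v \<Rightarrow> bool option"

definition dom_asg :: "'v assignment \<Rightarrow> 'v set" where
  "dom_asg \<sigma> = {x. \<sigma> x \<noteq> None}"

definition total :: "'v assignment \<Rightarrow> bool" where
  "total \<sigma> \<longleftrightarrow> (\<forall>x. \<sigma> x \<noteq> None)"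

fun lit_val :: "'v assignment \<Rightarrow> 'v lit \<Rightarrow> bool option" where
  "lit_val \<sigma> (Pos x) = \<sigma> x"
| "lit_val \<sigma> (Neg x) = map_option Not (\<sigma> x)"

definition tautology :: "'v clause \<Rightarrow> bool" where
  "tautology C \<longleftrightarrow> (\<exists>l\<in>C. neg_lit l \<in> C)"

definition wf_clause :: "'v clause \<Rightarrow> bool" where
  "wf_clause C \<longleftrightarrow> finite C \<and> \<not> tautology C"

definition satisfies :: "'v assignment \<Rightarrow> 'v clause \<Rightarrow> bool" where
  "satisfies \<sigma> C \<longleftrightarrow> (\<exists>l\<in>C. lit_val \<sigma> l = Some True)"

text \<open>C restricted by sigma, in the case it is not satisfied: remove falsified literals.\<close>
definition restrict_clause :: "'v assignment \<Rightarrow> 'v clause \<Rightarrow> 'v clause" where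
  "restrict_clause \<sigma> C = {l\<in>C. lit_val \<sigma> l = None}"

definition restrict :: "'v assignment \<Rightarrow> 'v formula \<Rightarrow> 'v formula" where
  "restrict \<sigma> \<Gamma> = restrict_clause \<sigma> ` {C\<in>\<Gamma>. \<not> satisfies \<sigma> C}"

definition neg_clause :: "'v clause \<Rightarrow> 'v assignment" where
  "neg_clause C x = (if Pos x \<in> C then Some False else if Neg x \<in> C then Some True else None)"

definition lit_asg :: "'v lit \<Rightarrow> 'v assignment" where
  "lit_asg l = neg_clause {neg_lit l}"

inductive up_refutes :: "'v formula \<Rightarrow> bool" where
  empty: "{} \<in> F \<Longrightarrow> up_refutes F"
| unit: "{l} \<in> F \<Longrightarrow> up_refutes (restrict (lit_asg l) F) \<Longrightarrow> up_refutes F"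

definition up_implies :: "'v formula \<Rightarrow> 'v clause \<Rightarrow> bool" where
  "up_implies \<Gamma> C \<longleftrightarrow> up_refutes (restrict (neg_clause C) \<Gamma>)"

definition up_implies_all :: "'v formula \<Rightarrow> 'v formula \<Rightarrow> bool" where
  "up_implies_all \<Gamma> \<Delta> \<longleftrightarrow> (\<forall>D\<in>\<Delta>. up_implies \<Gamma> D)"

text \<open>Composition tau o sigma for a partial assignment sigma.\<close>
definition compose :: "'v assignment \<Rightarrow> 'v assignment \<Rightarrow> 'v assignment" where
  "compose \<tau> \<sigma> x = (case \<sigma> x of None \<Rightarrow> \<tau> x | Some b \<Rightarrow> Some b)"

definition extends :: "'v assignment \<Rightarrow> 'v assignment \<Rightarrow> bool" where
  "extends \<tau> \<sigma> \<longleftrightarrow> (\<forall>x\<in>dom_asg \<sigma>. \<tau> x = \<sigma> x)"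

definition cost :: "'v set \<Rightarrow> 'v assignment \<Rightarrow> nat" where
  "cost B \<alpha> = (\<Sum>b\<in>B. if \<alpha> b = Some True then 1 else 0)"

text \<open>E = C \<or> l with l \<in> E and C = E - {l}.\<close>
definition cost_BC :: "'v set \<Rightarrow> 'v formula \<Rightarrow> 'v clause \<Rightarrow> 'v lit \<Rightarrow> bool" where
  "cost_BC B \<Gamma> E l \<longleftrightarrow> l \<in> E \<and>
     (\<forall>F\<in>\<Gamma>. neg_lit l \<in> F \<longrightarrow> tautology ((E - {l}) \<union> (F - {neg_lit l}))) \<and>
     (\<forall>b\<in>B. l \<noteq> Pos b)"

definition cost_LPR :: "'v set \<Rightarrow> 'v formula \<Rightarrow> 'v clause \<Rightarrow> bool" where
  "cost_LPR B \<Gamma> E \<longleftrightarrow> (\<exists>\<sigma>.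
     dom_asg \<sigma> = dom_asg (neg_clause E) \<and>
     card {x. \<sigma> x \<noteq> neg_clause E x} = 1 \<and>
     up_implies_all (restrict (neg_clause E) \<Gamma>) (restrict \<sigma> (\<Gamma> \<union> {E})) \<and>
     (\<forall>\<tau>. total \<tau> \<longrightarrow> extends \<tau> (neg_clause E) \<longrightarrow> cost B (compose \<tau> \<sigma>) \<le> cost B \<tau>))"

end

theory Submission
  imports Defs
begin

text \<open>The witness is \<open>\<sigma>\<close> = \<open>\<not>E\<close> with \<open>l\<close> flipped to true, i.e.
  \<open>compose (neg_clause E) (lit_asg l)\<close>. It satisfies \<open>E\<close> and every clause
  containing \<open>l\<close>. A clause \<open>F \<in> \<Gamma>\<close> containing \<open>\<not>l\<close> is blocked: its resolvent with \<open>E\<close> on \<open>l\<close> is a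
  tautology, so \<open>F\<close> contains the complement of a literal of \<open>E - {l}\<close>, which \<open>\<sigma>\<close> makes true.
  Every remaining clause avoids the variable of \<open>l\<close>, so \<open>\<sigma>\<close> and \<open>\<not>E\<close> agree on it and its reduct
  under \<open>\<sigma>\<close> is itself a clause of \<open>\<Gamma>\<close> reduced by \<open>\<not>E\<close>, refuted by unit propagation at once.
  Finally \<open>\<tau> \<circ> \<sigma>\<close> differs from \<open>\<tau>\<close> only by making \<open>l\<close> true, which cannot switch on a blocking
  variable.\<close>

lemma lit_val_neg_lit: "lit_val \<alpha> (neg_lit k) = map_option Not (lit_val \<alpha> k)"
  by (cases k; cases "\<alpha> (var k)") auto

lemma var_eq_var_imp: "var k = var l \<Longrightarrow> k = l \<or> k = neg_lit l"
  by (cases k; cases l) auto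

lemma lit_val_compose:
  "lit_val (compose \<tau> \<sigma>) k = (case lit_val \<sigma> k of None \<Rightarrow> lit_val \<tau> k | Some b \<Rightarrow> Some b)"
  by (cases k; cases "\<sigma> (var k)") (auto simp: compose_def)

lemma lit_val_lit_asg_self: "lit_val (lit_asg l) l = Some True"
  by (cases l) (auto simp: lit_asg_def neg_clause_def)

lemma lit_val_lit_asg_other: "var k \<noteq> var l \<Longrightarrow> lit_val (lit_asg l) k = None"
  by (cases k; cases l) (auto simp: lit_asg_def neg_clause_def)

lemma lit_val_cong: "\<alpha> (var k) = \<beta> (var k) \<Longrightarrow> lit_val \<alpha> k = lit_val \<beta> k"
  by (cases k) auto

lemma dom_asg_compose: "dom_asg (compose \<tau> \<sigma>) = dom_asg \<tau> \<union> dom_asg \<sigma>"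
  by (auto simp: dom_asg_def compose_def split: option.splits)

lemma dom_asg_lit_asg: "dom_asg (lit_asg l) = {var l}"
  by (cases l) (auto simp: dom_asg_def lit_asg_def neg_clause_def)

lemma compose_lit_asg_other: "x \<noteq> var l \<Longrightarrow> compose \<tau> (lit_asg l) x = \<tau> x"
  by (cases l) (auto simp: compose_def lit_asg_def neg_clause_def)

lemma lit_val_neg_clause_mem:
  assumes "\<not> tautology E" and "k \<in> E"
  shows "lit_val (neg_clause E) k = Some False"
proof (cases k)
  case (Neg x)
  with assms have "Pos x \<notin> E" unfolding tautology_def by force
  with assms Neg show ?thesis by (simp add: neg_clause_def)
qed (use assms in \<open>simp add: neg_clause_def\<close>)

lemma satisfies_cong:
  "(\<And>k. k \<in> F \<Longrightarrow> lit_val \<alpha> k = lit_val \<beta> k) \<Longrightarrow> satisfies \<alpha> F \<longleftrightarrow> satisfies \<beta> F"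
  unfolding satisfies_def by auto

lemma restrict_clause_cong:
  "(\<And>k. k \<in> F \<Longrightarrow> lit_val \<alpha> k = lit_val \<beta> k) \<Longrightarrow> restrict_clause \<alpha> F = restrict_clause \<beta> F"
  unfolding restrict_clause_def by auto

lemma not_tautology_restrict_clause: "\<not> tautology F \<Longrightarrow> \<not> tautology (restrict_clause \<alpha> F)"
  unfolding tautology_def restrict_clause_def by auto

lemma up_implies_mem:
  assumes "\<not> tautology D" and "D \<in> G"
  shows "up_implies G D"
proof -
  have "\<not> satisfies (neg_clause D) D" and "restrict_clause (neg_clause D) D = {}"
    using lit_val_neg_clause_mem[OF assms(1)]
    unfolding satisfies_def restrict_clause_def by auto
  then have "{} \<in> restrict (neg_clause D) G"
    unfolding restrict_def using assms(2) by force
  then show ?thesis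
    unfolding up_implies_def by (rule up_refutes.empty)
qed

lemma up_implies_all_subset:
  "\<Delta> \<subseteq> G \<Longrightarrow> \<forall>D\<in>\<Delta>. \<not> tautology D \<Longrightarrow> up_implies_all G \<Delta>"
  unfolding up_implies_all_def using up_implies_mem by blast

lemma compose_compose_extends:
  "extends \<tau> \<alpha> \<Longrightarrow> compose \<tau> (compose \<alpha> \<beta>) = compose \<tau> \<beta>"
  unfolding extends_def dom_asg_def
  by (rule ext) (auto simp: compose_def split: option.split)

lemma cost_compose_lit_asg_le:
  assumes "\<forall>b\<in>B. l \<noteq> Pos b"
  shows "cost B (compose \<tau> (lit_asg l)) \<le> cost B \<tau>"
  unfolding cost_def
proof (rule sum_mono)
  fix b assume "b \<in> B"
  with assms have "compose \<tau> (lit_asg l) b \<noteq> Some True \<or> compose \<tau> (lit_asg l) b = \<tau> b"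
    by (cases l) (auto simp: compose_def lit_asg_def neg_clause_def)
  then show "(if compose \<tau> (lit_asg l) b = Some True then 1 else 0)
      \<le> (if \<tau> b = Some True then 1 else (0::nat))"
    by auto
qed

context
  fixes E :: "'v clause" and l :: "'v lit"
  assumes E_not_tautology: "\<not> tautology E" and l_in_E: "l \<in> E"
begin

lemma neg_lit_notin_clause: "neg_lit l \<notin> E"
  using E_not_tautology l_in_E unfolding tautology_def by auto

lemma lit_val_flip_self: "lit_val (compose (neg_clause E) (lit_asg l)) l = Some True"
  by (simp add: lit_val_compose lit_val_lit_asg_self)

lemma lit_val_flip_other:
  "var k \<noteq> var l \<Longrightarrow> lit_val (compose (neg_clause E) (lit_asg l)) k = lit_val (neg_clause E) k"
  by (simp add: lit_val_compose lit_val_lit_asg_other)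

lemma lit_val_flip_mem:
  assumes "k \<in> E" and "k \<noteq> l"
  shows "lit_val (compose (neg_clause E) (lit_asg l)) k = Some False"
proof -
  have "var k \<noteq> var l"
    using var_eq_var_imp[of k l] assms neg_lit_notin_clause by auto
  then show ?thesis
    using lit_val_flip_other lit_val_neg_clause_mem[OF E_not_tautology assms(1)] by simp
qed

lemma dom_asg_flip: "dom_asg (compose (neg_clause E) (lit_asg l)) = dom_asg (neg_clause E)"
proof -
  have "var l \<in> dom_asg (neg_clause E)"
    using l_in_E by (cases l) (auto simp: dom_asg_def neg_clause_def)
  then show ?thesis
    by (auto simp: dom_asg_compose dom_asg_lit_asg)
qed

lemma flip_differs_exactly_at_var:
  "{x. compose (neg_clause E) (lit_asg l) x \<noteq> neg_clause E x} = {var l}"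
proof -
  have "lit_val (compose (neg_clause E) (lit_asg l)) l \<noteq> lit_val (neg_clause E) l"
    using lit_val_flip_self lit_val_neg_clause_mem[OF E_not_tautology l_in_E] by simp
  then have "compose (neg_clause E) (lit_asg l) (var l) \<noteq> neg_clause E (var l)"
    using lit_val_cong by metis
  then show ?thesis
    using compose_lit_asg_other[of _ l "neg_clause E"] by blast
qed

lemma unsatisfied_by_flip_avoids_var:
  assumes blocked: "neg_lit l \<in> F \<Longrightarrow> tautology ((E - {l}) \<union> (F - {neg_lit l}))"
    and F_not_tautology: "\<not> tautology F"
    and unsat: "\<not> satisfies (compose (neg_clause E) (lit_asg l)) F"
  shows "l \<notin> F" and "neg_lit l \<notin> F"
proof -
  let ?\<sigma> = "compose (neg_clause E) (lit_asg l)"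
  have true_notin: "k \<notin> F" if "lit_val ?\<sigma> k = Some True" for k
    using unsat that unfolding satisfies_def by auto
  show "l \<notin> F"
    using true_notin lit_val_flip_self by blast
  show "neg_lit l \<notin> F"
  proof
    assume "neg_lit l \<in> F"
    then obtain k where k: "k \<in> (E - {l}) \<union> (F - {neg_lit l})"
      and nk: "neg_lit k \<in> (E - {l}) \<union> (F - {neg_lit l})"
      using blocked unfolding tautology_def by auto
    txt \<open>Neither \<open>E\<close> nor \<open>F\<close> is a tautology, so the complementary pair is split between them.\<close>
    then obtain m where "m \<in> E - {l}" and "neg_lit m \<in> F"
    proof (cases "k \<in> E - {l}")
      case True
      then have "neg_lit k \<notin> E" using E_not_tautology unfolding tautology_def by auto
      with True nk that show ?thesis by auto
    next
      case False
      with k have "k \<in> F" by auto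
      then have "neg_lit k \<notin> F" using F_not_tautology unfolding tautology_def by auto
      with nk have "neg_lit k \<in> E - {l}" by auto
      moreover have "neg_lit (neg_lit k) = k" by (cases k) auto
      ultimately show ?thesis using that \<open>k \<in> F\<close> by metis
    qed
    moreover have "lit_val ?\<sigma> (neg_lit m) = Some True"
      using lit_val_flip_mem \<open>m \<in> E - {l}\<close> by (simp add: lit_val_neg_lit)
    ultimately show False using true_notin by blast
  qed
qed

lemma restrict_flip_subset:
  assumes "\<forall>F\<in>\<Gamma>. \<not> tautology F"
    and "\<forall>F\<in>\<Gamma>. neg_lit l \<in> F \<longrightarrow> tautology ((E - {l}) \<union> (F - {neg_lit l}))"
  shows "restrict (compose (neg_clause E) (lit_asg l)) (\<Gamma> \<union> {E}) \<subseteq> restrict (neg_clause E) \<Gamma>"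
proof
  let ?\<sigma> = "compose (neg_clause E) (lit_asg l)"
  fix D assume "D \<in> restrict ?\<sigma> (\<Gamma> \<union> {E})"
  then obtain F where F: "F \<in> \<Gamma> \<union> {E}" "\<not> satisfies ?\<sigma> F" "D = restrict_clause ?\<sigma> F"
    unfolding restrict_def by auto
  have "F \<noteq> E"
    using F(2) l_in_E lit_val_flip_self unfolding satisfies_def by auto
  with F(1) have "F \<in> \<Gamma>" by auto
  with assms F(2) have "l \<notin> F" "neg_lit l \<notin> F"
    using unsatisfied_by_flip_avoids_var by blast+
  then have agree: "lit_val ?\<sigma> k = lit_val (neg_clause E) k" if "k \<in> F" for k
    using that var_eq_var_imp[of k l] lit_val_flip_other by metis
  have "satisfies ?\<sigma> F \<longleftrightarrow> satisfies (neg_clause E) F"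
    by (rule satisfies_cong) (rule agree)
  moreover have "restrict_clause ?\<sigma> F = restrict_clause (neg_clause E) F"
    by (rule restrict_clause_cong) (rule agree)
  ultimately show "D \<in> restrict (neg_clause E) \<Gamma>"
    using F(2,3) \<open>F \<in> \<Gamma>\<close> unfolding restrict_def by auto
qed

end

theorem mainTheorem10:
  fixes B :: "'v set" and \<Gamma> :: "'v formula" and E :: "'v clause" and l :: "'v lit"
  assumes "finite B"
    and "\<forall>F\<in>\<Gamma>. wf_clause F"
    and "wf_clause E"
    and "cost_BC B \<Gamma> E l"
  shows "cost_LPR B \<Gamma> E"
proof -
  let ?\<sigma> = "compose (neg_clause E) (lit_asg l)"
  have \<Gamma>: "\<forall>F\<in>\<Gamma>. \<not> tautology F" and E: "\<not> tautology E"
    using assms(2,3) unfolding wf_clause_def by auto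
  from assms(4) have l: "l \<in> E"
    and blocked: "\<forall>F\<in>\<Gamma>. neg_lit l \<in> F \<longrightarrow> tautology ((E - {l}) \<union> (F - {neg_lit l}))"
    and not_blocking: "\<forall>b\<in>B. l \<noteq> Pos b"
    unfolding cost_BC_def by auto
  have "restrict ?\<sigma> (\<Gamma> \<union> {E}) \<subseteq> restrict (neg_clause E) \<Gamma>"
    using restrict_flip_subset[OF E l \<Gamma> blocked] .
  moreover have "\<forall>D\<in>restrict ?\<sigma> (\<Gamma> \<union> {E}). \<not> tautology D"
    using \<Gamma> E not_tautology_restrict_clause unfolding restrict_def by auto
  ultimately have "up_implies_all (restrict (neg_clause E) \<Gamma>) (restrict ?\<sigma> (\<Gamma> \<union> {E}))"
    by (rule up_implies_all_subset)
  moreover have "cost B (compose \<tau> ?\<sigma>) \<le> cost B \<tau>" if "extends \<tau> (neg_clause E)" for \<tau>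
    using cost_compose_lit_asg_le[OF not_blocking] compose_compose_extends[OF that] by simp
  ultimately show ?thesis
    unfolding cost_LPR_def
    using dom_asg_flip[OF E l] flip_differs_exactly_at_var[OF E l] by (intro exI[of _ ?\<sigma>]) auto
qed

end
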